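(* Assume Hypothesis 2 below. Then for every $x<\mu^{-1}$, $\mathbb{P}(\bar\tau_0^{n,D}\le x)\to0$ as $n\to\infty$.
   Context: Hypothesis 2 (M/M/1/1+D-EDF systems): for each $n\ge1$, an M/M/1/1+GI-EDF queue (Poisson arrivals, one non-idling server, infinite buffer, non-preemptive Earliest-Deadline-First discipline, residual time credits decreasing at unit rate, a customer whose residual credit reaches $0$ before entering service is lost) such that: initially there are $n+1$ customers in the buffer, all with time credit $nd$, where $d>0$; the arrival intensity $\lambda^n$ satisfies $\lambda^n\to\lambda>0$; service durations are i.i.d. exponential with parameter $\mu^n$, $\mu^n\to\mu$ where $d^{-1}<\mu<\lambda$; the initial time credit of every arriving customer is the deterministic number $d^n$, with $d^n/n\to d$. Let $\nu^{n,D}_t$ be its profile (point measure with a unit atom at the residual time credit of each customer waiting in the buffer at $t$ and of each customer lost up to $t$), $\tau_0^{n,D}=\inf\{t\ge0:\nu^{n,D}_t((0,\infty))=0\}$ the first time the buffer is empty, and $\bar\tau_0^{n,D}=\tau_0^{n,D}/n$. *)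

theory Defs
  imports "HOL-Probability.Probability"
begin

text \<open>Deterministic dynamics of a single-server, non-idling, non-preemptive EDF queue
with reneging (customers whose residual credit hits 0 while waiting are lost).
Customers are indexed by nat; arr k is the arrival time, dl k the absolute deadline
(arrival time + initial time credit), so the residual credit at time t is dl k - t.
S j is the duration of the j-th service (in order of service).\<close>

definition waiting :: "(nat \<Rightarrow> real) \<Rightarrow> (nat \<Rightarrow> real) \<Rightarrow> real \<Rightarrow> nat set \<Rightarrow> nat set" where
  "waiting arr dl t X = {k. arr k \<le> t \<and> t < dl k \<and> k \<notin> X}"

definition edf_pick :: "(nat \<Rightarrow> real) \<Rightarrow> nat set \<Rightarrow> nat" where
  "edf_pick dl E = (LEAST k. k \<in> E \<and> (\<forall>k'\<in>E. dl k \<le> dl k'))"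

text \<open>Given the time f at which the server becomes free and the set X of customers
already taken into service, the next service start: immediately if someone is waiting
(non-idling), otherwise at the next arrival.\<close>
definition next_start :: "(nat \<Rightarrow> real) \<Rightarrow> (nat \<Rightarrow> real) \<Rightarrow> real \<Rightarrow> nat set \<Rightarrow> real" where
  "next_start arr dl f X =
     (if waiting arr dl f X \<noteq> {} then f else Inf {arr k | k. k \<notin> X \<and> f < arr k})"

primrec sched_state :: "(nat \<Rightarrow> real) \<Rightarrow> (nat \<Rightarrow> real) \<Rightarrow> (nat \<Rightarrow> real) \<Rightarrow> nat \<Rightarrow> real \<times> nat set" where
  "sched_state arr dl S 0 = (0, {})"
| "sched_state arr dl S (Suc j) =
     (let f = fst (sched_state arr dl S j); X = snd (sched_state arr dl S j);
          t = next_start arr dl f X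
      in (t + S j, insert (edf_pick dl (waiting arr dl t X)) X))"

definition start_time :: "(nat \<Rightarrow> real) \<Rightarrow> (nat \<Rightarrow> real) \<Rightarrow> (nat \<Rightarrow> real) \<Rightarrow> nat \<Rightarrow> real" where
  "start_time arr dl S j = next_start arr dl (fst (sched_state arr dl S j)) (snd (sched_state arr dl S j))"

definition served_cust :: "(nat \<Rightarrow> real) \<Rightarrow> (nat \<Rightarrow> real) \<Rightarrow> (nat \<Rightarrow> real) \<Rightarrow> nat \<Rightarrow> nat" where
  "served_cust arr dl S j = edf_pick dl (waiting arr dl (start_time arr dl S j) (snd (sched_state arr dl S j)))"

text \<open>Customers in the buffer at time t: arrived, residual credit > 0, not yet taken into
service. This is the set of atoms of the profile nu_t in (0,infinity).\<close>
definition buffer :: "(nat \<Rightarrow> real) \<Rightarrow> (nat \<Rightarrow> real) \<Rightarrow> (nat \<Rightarrow> real) \<Rightarrow> real \<Rightarrow> nat set" where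
  "buffer arr dl S t = {k. arr k \<le> t \<and> t < dl k \<and>
       \<not> (\<exists>j. start_time arr dl S j \<le> t \<and> served_cust arr dl S j = k)}"

text \<open>First time the buffer is empty (inf of the empty set = infinity).\<close>
definition tau0 :: "(nat \<Rightarrow> real) \<Rightarrow> (nat \<Rightarrow> real) \<Rightarrow> (nat \<Rightarrow> real) \<Rightarrow> ereal" where
  "tau0 arr dl S = Inf {ereal t | t. 0 \<le> t \<and> buffer arr dl S t = {}}"

text \<open>The n-th system: customers 0..n are present at time 0 with credit n*d; customer
n+1+i is the (i+1)-th arrival, at time A 0 + ... + A i (A = i.i.d. interarrival times),
with initial credit dn.\<close>
definition arr_n :: "nat \<Rightarrow> (nat \<Rightarrow> real) \<Rightarrow> nat \<Rightarrow> real" where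
  "arr_n n A k = (if k \<le> n then 0 else (\<Sum>m\<le>k - (n + 1). A m))"

definition dl_n :: "nat \<Rightarrow> real \<Rightarrow> real \<Rightarrow> (nat \<Rightarrow> real) \<Rightarrow> nat \<Rightarrow> real" where
  "dl_n n d dn A k = (if k \<le> n then real n * d else arr_n n A k + dn)"

definition taubar :: "nat \<Rightarrow> real \<Rightarrow> real \<Rightarrow> (nat \<Rightarrow> real) \<Rightarrow> (nat \<Rightarrow> real) \<Rightarrow> ereal" where
  "taubar n d dn A S = tau0 (arr_n n A) (dl_n n d dn A) S / ereal (real n)"

text \<open>Outer probability (coincides with the probability on measurable events).\<close>
definition outer_prob :: "'a measure \<Rightarrow> 'a set \<Rightarrow> real" where
  "outer_prob M E = Inf {measure M B | B. B \<in> sets M \<and> E \<inter> space M \<subseteq> B}"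

end

theory Submission
  imports Defs
begin

text \<open>The \<open>n + 1\<close> initial customers have credit \<open>n d\<close>, and at most one customer enters
  service per service period, so until time \<open>min (n d) (S\<^sub>0 + \<dots> + S\<^sub>n\<^sub>-\<^sub>1)\<close> one of them is
  still in the buffer. Since \<open>x < 1/\<mu> < d\<close>, the event \<open>\<tau>\<^sub>0/n \<le> x\<close> therefore forces the Erlang
  sum \<open>S\<^sub>0 + \<dots> + S\<^sub>n\<^sub>-\<^sub>1\<close> (mean \<open>n/\<mu>\<close>, variance \<open>n/\<mu>\<^sup>2\<close>) below \<open>n x\<close>, which by Chebyshev
  has probability at most \<open>1 / (n (1 - \<mu> x)\<^sup>2)\<close>.\<close>

lemma next_start_ge:
  assumes "\<exists>k. k \<notin> X \<and> f < arr k"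
  shows "f \<le> next_start arr dl f X"
proof (cases "waiting arr dl f X = {}")
  case True
  have "f \<le> Inf {arr k | k. k \<notin> X \<and> f < arr k}"
    by (rule cInf_greatest) (use assms in auto)
  then show ?thesis using True unfolding next_start_def by simp
qed (simp add: next_start_def)

lemma finite_sched_state: "finite (snd (sched_state arr dl S j))"
  by (induction j) (simp_all add: Let_def)

lemma fst_sched_state_Suc: "fst (sched_state arr dl S (Suc j)) = start_time arr dl S j + S j"
  by (simp add: Let_def start_time_def)

lemma start_time_ge_sum:
  assumes late: "\<And>f X. finite X \<Longrightarrow> \<exists>k. k \<notin> X \<and> f < arr k"
  shows "(\<Sum>i<j. S i) \<le> start_time arr dl S j"
proof -
  have fst_le: "fst (sched_state arr dl S j) \<le> start_time arr dl S j" for j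
    unfolding start_time_def by (rule next_start_ge) (use late finite_sched_state in blast)
  have "(\<Sum>i<j. S i) \<le> fst (sched_state arr dl S j)"
  proof (induction j)
    case (Suc j)
    show ?case unfolding fst_sched_state_Suc using Suc fst_le[of j] by simp
  qed simp
  then show ?thesis using fst_le[of j] by (rule order_trans)
qed

text \<open>Pigeonhole: only the services \<open>0, \<dots>, n - 1\<close> can start before \<open>S\<^sub>0 + \<dots> + S\<^sub>n\<^sub>-\<^sub>1\<close>.\<close>

lemma buffer_nonempty:
  assumes late: "\<And>f X. finite X \<Longrightarrow> \<exists>k. k \<notin> X \<and> f < arr k"
    and S_nonneg: "\<And>i. 0 \<le> S i"
    and waiting: "\<And>k. k \<le> n \<Longrightarrow> arr k \<le> t \<and> t < dl k"
    and t: "t < (\<Sum>i<n. S i)"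
  shows "buffer arr dl S t \<noteq> {}"
proof
  assume empty: "buffer arr dl S t = {}"
  have "{0..n} \<subseteq> served_cust arr dl S ` {..<n}"
  proof
    fix k assume "k \<in> {0..n}"
    with empty waiting obtain j where j: "start_time arr dl S j \<le> t" "served_cust arr dl S j = k"
      unfolding buffer_def by auto
    have "j < n"
    proof (rule ccontr)
      assume "\<not> j < n"
      then have "(\<Sum>i<n. S i) \<le> (\<Sum>i<j. S i)"
        by (intro sum_mono2) (auto simp: S_nonneg)
      also have "\<dots> \<le> start_time arr dl S j" by (rule start_time_ge_sum[OF late])
      finally show False using j(1) t by linarith
    qed
    with j(2) show "k \<in> served_cust arr dl S ` {..<n}" by auto
  qed
  then have "card {0..n} \<le> card (served_cust arr dl S ` {..<n})"
    by (intro card_mono) auto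
  also have "\<dots> \<le> card {..<n}" by (rule card_image_le) simp
  finally show False by simp
qed

lemma arr_n_late:
  assumes A_nonneg: "\<And>m. 0 \<le> A m" and unbounded: "\<And>c. \<exists>m. c < (\<Sum>l\<le>m. A l)"
    and "finite X"
  shows "\<exists>k. k \<notin> X \<and> f < arr_n n A k"
proof -
  obtain m where m: "f < (\<Sum>l\<le>m. A l)" using unbounded by blast
  obtain K where K: "\<forall>k\<in>X. k < K"
    using \<open>finite X\<close> finite_nat_bounded by (metis lessThan_iff subsetD)
  have "(\<Sum>l\<le>m. A l) \<le> (\<Sum>l\<le>m + K. A l)"
    by (rule sum_mono2) (auto simp: A_nonneg)
  moreover have "arr_n n A (n + 1 + m + K) = (\<Sum>l\<le>m + K. A l)"
    unfolding arr_n_def by simp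
  ultimately show ?thesis using m K by (intro exI[of _ "n + 1 + m + K"]) auto
qed

lemma taubar_gt:
  assumes A_nonneg: "\<And>m. 0 \<le> A m" and unbounded: "\<And>c. \<exists>m. c < (\<Sum>l\<le>m. A l)"
    and S_nonneg: "\<And>i. 0 \<le> S i"
    and "n \<ge> 1" and "x < d" and S_sum: "real n * x < (\<Sum>i<n. S i)"
  shows "ereal x < taubar n d dn A S"
proof -
  have "buffer (arr_n n A) (dl_n n d dn A) S t \<noteq> {}"
    if "0 \<le> t" "t < real n * d" "t < (\<Sum>i<n. S i)" for t
    by (rule buffer_nonempty[OF arr_n_late[OF A_nonneg unbounded] S_nonneg])
      (use that in \<open>auto simp: arr_n_def dl_n_def\<close>)
  then have le_tau0: "ereal (min (real n * d) (\<Sum>i<n. S i)) \<le> tau0 (arr_n n A) (dl_n n d dn A) S"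
    unfolding tau0_def by (intro Inf_greatest) (force simp: min_le_iff_disj not_less[symmetric])
  have "real n * x < min (real n * d) (\<Sum>i<n. S i)"
    using S_sum \<open>x < d\<close> \<open>n \<ge> 1\<close> by simp
  then have "ereal (real n) * ereal x < tau0 (arr_n n A) (dl_n n d dn A) S"
    using le_tau0 by (metis less_ereal.simps(1) order_less_le_trans times_ereal.simps(1))
  then show ?thesis
    unfolding taubar_def using \<open>n \<ge> 1\<close> by (simp add: ereal_less_divide_pos)
qed

lemma sum_unbounded_if_frequently_ge_1:
  fixes A :: "nat \<Rightarrow> real"
  assumes A_nonneg: "\<And>m. 0 \<le> A m" and frequently: "\<And>N. \<exists>m\<ge>N. 1 \<le> A m"
  shows "\<exists>m. c < (\<Sum>l\<le>m. A l)"
proof -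
  have "\<exists>m. real K \<le> (\<Sum>l\<le>m. A l)" for K
  proof (induction K)
    case 0
    show ?case by (auto intro: sum_nonneg A_nonneg)
  next
    case (Suc K)
    then obtain m where m: "real K \<le> (\<Sum>l\<le>m. A l)" by blast
    obtain m' where m': "m' \<ge> Suc m" "1 \<le> A m'" using frequently by blast
    have "(\<Sum>l\<le>m. A l) + A m' = (\<Sum>l\<in>insert m' {..m}. A l)" using m' by simp
    also have "\<dots> \<le> (\<Sum>l\<le>m'. A l)" by (rule sum_mono2) (use m' A_nonneg in auto)
    finally show ?case using m m' by (intro exI[of _ m']) simp
  qed
  then obtain m where "real (nat \<lceil>c\<rceil> + 1) \<le> (\<Sum>l\<le>m. A l)" by blast
  then show ?thesis by (intro exI[of _ m]) linarith
qed

lemma outer_prob_nonneg: "0 \<le> outer_prob M E"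
  unfolding outer_prob_def by (rule cInf_greatest) auto

lemma outer_prob_le_measure_AE:
  assumes B: "B \<in> sets M" and AE: "AE \<omega> in M. \<omega> \<in> E \<longrightarrow> \<omega> \<in> B"
  shows "outer_prob M E \<le> measure M B"
proof -
  obtain N where N: "{\<omega> \<in> space M. \<not> (\<omega> \<in> E \<longrightarrow> \<omega> \<in> B)} \<subseteq> N" "emeasure M N = 0" "N \<in> sets M"
    using AE by (rule AE_E)
  have "outer_prob M E \<le> measure M (B \<union> N)"
    unfolding outer_prob_def by (rule cInf_lower) (use B N in \<open>auto intro: bdd_belowI[of _ 0]\<close>)
  also have "\<dots> = measure M B"
    using B N by (intro measure_Un_null_set) (auto simp: null_sets_def)
  finally show ?thesis .
qed

lemma (in prob_space) indep_vars_reindex: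
  assumes indep: "indep_vars M' Z UNIV" and "inj f"
  shows "indep_vars (\<lambda>j. M' (f j)) (\<lambda>j. Z (f j)) UNIV"
proof -
  define F where "F i = {Z i -` A \<inter> space M | A. A \<in> sets (M' i)}" for i
  have rv: "\<forall>i. random_variable (M' i) (Z i)" and F: "indep_sets F UNIV"
    using indep unfolding indep_vars_def2 F_def by auto
  have "indep_sets (\<lambda>j. F (f j)) UNIV"
  proof (rule indep_setsI)
    fix i show "F (f i) \<subseteq> events"
      using F unfolding indep_sets_def by blast
  next
    fix J and A assume J: "J \<noteq> {}" "finite J" and A: "\<forall>j\<in>J. A j \<in> F (f j)"
    have "prob (\<Inter>s\<in>f ` J. A (inv f s)) = (\<Prod>s\<in>f ` J. prob (A (inv f s)))"
      by (rule indep_setsD[OF F]) (use J A \<open>inj f\<close> in auto)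
    then show "prob (\<Inter>j\<in>J. A j) = (\<Prod>j\<in>J. prob (A j))"
      using \<open>inj f\<close> by (simp add: prod.reindex inj_on_def)
  qed
  then show ?thesis using rv unfolding indep_vars_def2 F_def by auto
qed

lemma (in prob_space) indep_vars_case_sum:
  assumes "indep_vars (\<lambda>_. N) (\<lambda>s. case s of Inl i \<Rightarrow> X i | Inr j \<Rightarrow> Y j) UNIV"
  shows "indep_vars (\<lambda>_. N) X UNIV" and "indep_vars (\<lambda>_. N) Y UNIV"
  using indep_vars_reindex[OF assms, of Inl] indep_vars_reindex[OF assms, of Inr]
  by (simp_all add: inj_def)

lemma (in prob_space) prob_sum_exponential_le:
  assumes indep: "indep_vars (\<lambda>_. borel) S UNIV"
    and dist: "\<And>j. distributed M lborel (S j) (exponential_density l)"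
    and "0 < l" and "n \<ge> 1" and "l * x < 1"
  shows "prob {\<omega>\<in>space M. (\<Sum>i<n. S i \<omega>) \<le> real n * x} \<le> 1 / (real n * (1 - l * x)\<^sup>2)"
proof -
  define Y where "Y \<omega> = (\<Sum>i<n. S i \<omega>)" for \<omega>
  have Y: "distributed M lborel Y (erlang_density (n - 1) l)"
    unfolding Y_def using exponential_distributed_sum[where X=S and I="{..<n}", OF _ _ \<open>0 < l\<close> dist]
      indep_vars_subset[OF indep] \<open>n \<ge> 1\<close> by (auto simp: lessThan_empty_iff)
  have [measurable]: "Y \<in> borel_measurable M" using distributed_measurable[OF Y] by simp
  have EY: "expectation Y = real n / l"
    using erlang_ith_moment[OF \<open>0 < l\<close> Y, of 1] \<open>n \<ge> 1\<close> by (simp add: fact_reduce[of n])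
  have VY: "variance Y = real n / l\<^sup>2"
    using erlang_distributed_variance[OF \<open>0 < l\<close> Y] \<open>n \<ge> 1\<close> by simp
  define a where "a = real n * (1 - l * x) / l"
  have "a > 0" unfolding a_def using \<open>n \<ge> 1\<close> \<open>0 < l\<close> \<open>l * x < 1\<close> by simp
  have "a = real n / l - real n * x" unfolding a_def using \<open>0 < l\<close> by (simp add: field_simps)
  then have "prob {\<omega>\<in>space M. Y \<omega> \<le> real n * x} \<le> prob {\<omega>\<in>space M. a \<le> \<bar>Y \<omega> - expectation Y\<bar>}"
    unfolding EY by (intro finite_measure_mono) auto
  also have "\<dots> \<le> variance Y / a\<^sup>2"
    by (rule Chebyshev_inequality) (use erlang_ith_moment_integrable[OF \<open>0 < l\<close> Y] \<open>a > 0\<close> in auto)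
  also have "\<dots> = 1 / (real n * (1 - l * x)\<^sup>2)"
    unfolding VY a_def using \<open>n \<ge> 1\<close> \<open>0 < l\<close> \<open>l * x < 1\<close>
    by (simp add: power_divide power_mult_distrib power2_eq_square[of "real n"])
  finally show ?thesis unfolding Y_def .
qed

lemma (in prob_space) AE_exponential_nonneg:
  assumes "distributed M lborel X (exponential_density l)"
  shows "AE \<omega> in M. 0 \<le> X \<omega>"
  by (subst distributed_AE2[OF assms]) (auto simp: exponential_density_def)

text \<open>Each block \<open>A\<^sub>N, \<dots>, A\<^sub>N\<^sub>+\<^sub>K\<close> stays below 1 with probability at most \<open>(1 - e\<^sup>-\<^sup>l)\<^sup>K\<^sup>+\<^sup>1\<close>.\<close>

lemma (in prob_space) AE_exponential_frequently_ge_1: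
  fixes A :: "nat \<Rightarrow> 'a \<Rightarrow> real"
  assumes indep: "indep_vars (\<lambda>_. borel) A UNIV"
    and dist: "\<And>j. distributed M lborel (A j) (exponential_density l)"
    and "0 < l"
  shows "AE \<omega> in M. \<exists>m\<ge>N. 1 \<le> A m \<omega>"
proof -
  have [measurable]: "A j \<in> borel_measurable M" for j
    using distributed_measurable[OF dist[of j]] by simp
  define q where "q = 1 - exp (- l)"
  define Z where "Z = {\<omega>\<in>space M. \<forall>m\<ge>N. A m \<omega> < 1}"
  have Z: "Z \<in> events" unfolding Z_def
  proof (rule sets.sets_Collect_countable_All[where P="\<lambda>m \<omega>. N \<le> m \<longrightarrow> A m \<omega> < 1"])
    fix m show "{\<omega>\<in>space M. N \<le> m \<longrightarrow> A m \<omega> < 1} \<in> events"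
      by (cases "N \<le> m") auto
  qed
  have "prob Z \<le> q ^ Suc K" for K
  proof -
    have "prob Z \<le> prob (\<Inter>m\<in>{N..N+K}. A m -` {..<1} \<inter> space M)"
      by (rule finite_measure_mono) (auto simp: Z_def)
    also have "\<dots> = (\<Prod>m\<in>{N..N+K}. prob (A m -` {..<1} \<inter> space M))"
      by (rule indep_varsD[OF indep]) auto
    also have "\<dots> \<le> (\<Prod>m\<in>{N..N+K}. q)"
    proof (rule prod_mono)
      fix m
      have "prob (A m -` {..<1} \<inter> space M) \<le> \<P>(\<omega> in M. A m \<omega> \<le> 1)"
        by (rule finite_measure_mono) auto
      also have "\<dots> = q"
        using exponential_distributedD_le[OF dist[of m] _ \<open>0 < l\<close>, of 1] by (simp add: q_def)
      finally show "0 \<le> prob (A m -` {..<1} \<inter> space M) \<and> prob (A m -` {..<1} \<inter> space M) \<le> q"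
        by simp
    qed
    finally show ?thesis by simp
  qed
  moreover have "(\<lambda>K. q ^ Suc K) \<longlonglongrightarrow> 0"
    by (rule LIMSEQ_Suc, rule LIMSEQ_power_zero) (use \<open>0 < l\<close> in \<open>simp add: q_def\<close>)
  ultimately have "prob Z \<le> 0"
    by (intro tendsto_lowerbound[of _ 0]) (auto intro: always_eventually)
  then have "emeasure M Z = 0" using Z by (simp add: emeasure_eq_measure measure_le_0_iff)
  then show ?thesis
    by (subst AE_iff_measurable[OF Z]) (auto simp: Z_def not_le dest: leD)
qed

lemma (in prob_space) outer_prob_taubar_le:
  assumes indepA: "indep_vars (\<lambda>_. borel) A UNIV" and indepS: "indep_vars (\<lambda>_. borel) S UNIV"
    and distA: "\<And>i. distributed M lborel (A i) (exponential_density l)"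
    and distS: "\<And>j. distributed M lborel (S j) (exponential_density m)"
    and "0 < l" and "0 < m" and "n \<ge> 1" and "x < d" and "m * x < 1"
  shows "outer_prob M {\<omega> \<in> space M. taubar n d dn (\<lambda>i. A i \<omega>) (\<lambda>j. S j \<omega>) \<le> ereal x}
           \<le> 1 / (real n * (1 - m * x)\<^sup>2)"
proof -
  have [measurable]: "S j \<in> borel_measurable M" for j
    using distributed_measurable[OF distS[of j]] by simp
  have "AE \<omega> in M. (\<forall>i. 0 \<le> S i \<omega>) \<and> (\<forall>i. 0 \<le> A i \<omega>) \<and> (\<forall>N. \<exists>i\<ge>N. 1 \<le> A i \<omega>)"
    using AE_exponential_nonneg[OF distS] AE_exponential_nonneg[OF distA]
      AE_exponential_frequently_ge_1[OF indepA distA \<open>0 < l\<close>]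
    by (simp add: AE_all_countable)
  then have "AE \<omega> in M. \<omega> \<in> {\<omega> \<in> space M. taubar n d dn (\<lambda>i. A i \<omega>) (\<lambda>j. S j \<omega>) \<le> ereal x}
               \<longrightarrow> \<omega> \<in> {\<omega>\<in>space M. (\<Sum>i<n. S i \<omega>) \<le> real n * x}"
  proof eventually_elim
    case (elim \<omega>)
    have "ereal x < taubar n d dn (\<lambda>i. A i \<omega>) (\<lambda>j. S j \<omega>)" if "real n * x < (\<Sum>i<n. S i \<omega>)"
      using elim that \<open>n \<ge> 1\<close> \<open>x < d\<close> by (intro taubar_gt sum_unbounded_if_frequently_ge_1) auto
    then show ?case by (auto simp: not_le[symmetric])
  qed
  then have "outer_prob M {\<omega> \<in> space M. taubar n d dn (\<lambda>i. A i \<omega>) (\<lambda>j. S j \<omega>) \<le> ereal x}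
               \<le> prob {\<omega>\<in>space M. (\<Sum>i<n. S i \<omega>) \<le> real n * x}"
    by (intro outer_prob_le_measure_AE) measurable
  also have "\<dots> \<le> 1 / (real n * (1 - m * x)\<^sup>2)"
    by (rule prob_sum_exponential_le) fact+
  finally show ?thesis .
qed

theorem mainTheorem4:
  fixes M :: "nat \<Rightarrow> 'a measure"
    and A S :: "nat \<Rightarrow> nat \<Rightarrow> 'a \<Rightarrow> real"
    and lam mu dn :: "nat \<Rightarrow> real"
    and lam0 mu0 d x :: real
  assumes ps: "\<And>n. n \<ge> 1 \<Longrightarrow> prob_space (M n)"
    and indep: "\<And>n. n \<ge> 1 \<Longrightarrow>
       prob_space.indep_vars (M n) (\<lambda>_. borel) (\<lambda>s. case s of Inl i \<Rightarrow> A n i | Inr j \<Rightarrow> S n j) UNIV"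
    and distA: "\<And>n i. n \<ge> 1 \<Longrightarrow> distributed (M n) lborel (A n i) (exponential_density (lam n))"
    and distS: "\<And>n j. n \<ge> 1 \<Longrightarrow> distributed (M n) lborel (S n j) (exponential_density (mu n))"
    and lam_pos: "\<And>n. n \<ge> 1 \<Longrightarrow> 0 < lam n"
    and mu_pos: "\<And>n. n \<ge> 1 \<Longrightarrow> 0 < mu n"
    and dn_pos: "\<And>n. n \<ge> 1 \<Longrightarrow> 0 < dn n"
    and lam_lim: "lam \<longlonglongrightarrow> lam0"
    and mu_lim: "mu \<longlonglongrightarrow> mu0"
    and dn_lim: "(\<lambda>n. dn n / real n) \<longlonglongrightarrow> d"
    and d_pos: "0 < d"
    and lam_pos': "0 < lam0"
    and mu_lb: "1 / d < mu0"
    and mu_ub: "mu0 < lam0"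
    and x_lt: "x < 1 / mu0"
  shows "(\<lambda>n. outer_prob (M n)
            {\<omega> \<in> space (M n). taubar n d (dn n) (\<lambda>i. A n i \<omega>) (\<lambda>j. S n j \<omega>) \<le> ereal x})
         \<longlonglongrightarrow> 0"
proof -
  have "0 < mu0" using mu_lb d_pos by (meson less_trans zero_less_divide_1_iff)
  then have "1 / mu0 < d" "mu0 * x < 1"
    using mu_lb x_lt d_pos by (simp_all add: field_simps)
  with x_lt have "x < d" by linarith
  have "eventually (\<lambda>n. n \<ge> 1 \<and> mu n * x < 1) sequentially"
    using eventually_ge_at_top order_tendstoD(2)[OF tendsto_mult_right[OF mu_lim] \<open>mu0 * x < 1\<close>]
    by (rule eventually_conj)
  then have upper: "eventually (\<lambda>n. outer_prob (M n)
            {\<omega> \<in> space (M n). taubar n d (dn n) (\<lambda>i. A n i \<omega>) (\<lambda>j. S n j \<omega>) \<le> ereal x}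
          \<le> 1 / (real n * (1 - mu n * x)\<^sup>2)) sequentially"
  proof eventually_elim
    case (elim n)
    then have n: "n \<ge> 1" and "mu n * x < 1" by simp_all
    interpret prob_space "M n" using ps n .
    show ?case
      using indep_vars_case_sum[OF indep[OF n]] distA[OF n] distS[OF n] lam_pos[OF n] mu_pos[OF n]
        n \<open>x < d\<close> \<open>mu n * x < 1\<close>
      by (rule outer_prob_taubar_le)
  qed
  have "(\<lambda>n. 1 / real n * (1 / (1 - mu n * x)\<^sup>2)) \<longlonglongrightarrow> 0 * (1 / (1 - mu0 * x)\<^sup>2)"
    using \<open>mu0 * x < 1\<close> by (intro tendsto_intros mu_lim lim_1_over_n) simp
  then have "(\<lambda>n. 1 / (real n * (1 - mu n * x)\<^sup>2)) \<longlonglongrightarrow> 0" by simp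
  from tendsto_sandwich[OF always_eventually upper tendsto_const this] show ?thesis
    by (simp add: outer_prob_nonneg)
qed

end
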